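(* Let $d\ge1$, $\lambda>0$, $\delta>0$, and let $f:\mathbb{R}^d\to\mathbb{R}$ satisfy: (A1) $f$ is continuous and has at least one minimizer; (A2) $\int_{\mathbb{R}^d}\exp(-f(y)/\delta)\,dy<+\infty$. Then for every $x\in\mathbb{R}^d$, \[\nabla^2f^{\lambda,\delta}(x)=\frac1\lambda I-\frac{1}{\lambda^2\delta}\Sigma_{\lambda,\delta}(x),\] where $\Sigma_{\lambda,\delta}(x):=\int_{\mathbb{R}^d}(y-\operatorname{zprox}^\delta_{\lambda,f}(x))(y-\operatorname{zprox}^\delta_{\lambda,f}(x))^\top d\mu_x(y)\succeq0$. In particular, if $\Sigma_{\lambda,\delta}(x)\preceq\lambda\delta I$, then $\nabla^2 f^{\lambda,\delta}(x)\succeq 0$ (i.e. $f^{\lambda,\delta}$ is convex at $x$).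
   Context: $\mu_x$ is the probability measure on $\mathbb{R}^d$ with density proportional to $\exp(-f(y)/\delta)\exp(-\|y-x\|^2/(2\lambda\delta))$; its mean is $\operatorname{zprox}^\delta_{\lambda,f}(x)=\dfrac{\mathbb{E}_{y\sim\mathcal N(x,\lambda\delta I)}[y\exp(-f(y)/\delta)]}{\mathbb{E}_{y\sim\mathcal N(x,\lambda\delta I)}[\exp(-f(y)/\delta)]}$. The soft Moreau envelope is $f^{\lambda,\delta}(x)=-\delta\log\mathbb{E}_{y\sim\mathcal N(x,\lambda\delta I)}[\exp(-f(y)/\delta)]$. *)

theory Defs
  imports "HOL-Analysis.Analysis"
begin

definition gauss_dens :: "real \<Rightarrow> real^'n \<Rightarrow> real^'n \<Rightarrow> real" where
  "gauss_dens s x y = (2 * pi * s) powr (- real CARD('n) / 2) * exp (- (norm (y - x))\<^sup>2 / (2 * s))"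

definition gauss_exp :: "real \<Rightarrow> real^'n \<Rightarrow> (real^'n \<Rightarrow> 'b::{banach,second_countable_topology}) \<Rightarrow> 'b" where
  "gauss_exp s x g = (LINT y|lborel. gauss_dens s x y *\<^sub>R g y)"

definition soft_moreau :: "(real^'n \<Rightarrow> real) \<Rightarrow> real \<Rightarrow> real \<Rightarrow> real^'n \<Rightarrow> real" where
  "soft_moreau f lam del x = - del * ln (gauss_exp (lam * del) x (\<lambda>y. exp (- f y / del)))"

definition zprox :: "(real^'n \<Rightarrow> real) \<Rightarrow> real \<Rightarrow> real \<Rightarrow> real^'n \<Rightarrow> real^'n" where
  "zprox f lam del x = gauss_exp (lam * del) x (\<lambda>y. exp (- f y / del) *\<^sub>R y)
                         /\<^sub>R gauss_exp (lam * del) x (\<lambda>y. exp (- f y / del))"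

text \<open>Unnormalized density of mu_x.\<close>
definition mu_dens :: "(real^'n \<Rightarrow> real) \<Rightarrow> real \<Rightarrow> real \<Rightarrow> real^'n \<Rightarrow> real^'n \<Rightarrow> real" where
  "mu_dens f lam del x y = exp (- f y / del) * exp (- (norm (y - x))\<^sup>2 / (2 * lam * del))"

definition outer :: "real^'n \<Rightarrow> real^'n \<Rightarrow> real^'n^'n" where
  "outer u v = (\<chi> i j. u $ i * v $ j)"

definition Sigma :: "(real^'n \<Rightarrow> real) \<Rightarrow> real \<Rightarrow> real \<Rightarrow> real^'n \<Rightarrow> real^'n^'n" where
  "Sigma f lam del x =
     (LINT y|lborel. mu_dens f lam del x y *\<^sub>R outer (y - zprox f lam del x) (y - zprox f lam del x))
       /\<^sub>R (LINT y|lborel. mu_dens f lam del x y)"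

definition psd :: "real^'n^'n \<Rightarrow> bool" where
  "psd A \<longleftrightarrow> (\<forall>v. 0 \<le> v \<bullet> (A *v v))"

end

theory Submission
  imports Defs
begin

(* Write Z(x) and M(x) for the integrals of mu_dens x y and of mu_dens x y *\<^sub>R y over y, so that
   zprox = M / Z and the soft Moreau envelope is -\<delta> ln (c Z), with c the Gaussian normalising
   constant.  Integrability of exp (-f/\<delta>) dominates all moments of mu_dens x of order at most two,
   locally uniformly in x, so one may differentiate under the integral sign, using
   d/dx mu_dens x y = mu_dens x y (y - x) / (\<lambda>\<delta>).  This gives the gradient (x - zprox x) / \<lambda>,
   and the quotient rule turns the derivative of zprox into \<Sigma>(x) / (\<lambda>\<delta>), because mu_dens x
   integrates y - zprox x to zero.  \<Sigma>(x) is positive semidefinite as a covariance matrix, and the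
   Hessian is the positive multiple 1/(\<lambda>\<^sup>2\<delta>) of \<lambda>\<delta> I - \<Sigma>(x). *)

lemma integral_dominated_convergence_at:
  fixes s :: "'a::first_countable_topology \<Rightarrow> 'm \<Rightarrow> 'b::{banach,second_countable_topology}"
  assumes "f \<in> borel_measurable M" and "\<And>x. s x \<in> borel_measurable M" and "integrable M w"
    and lim: "AE y in M. ((\<lambda>x. s x y) \<longlongrightarrow> f y) (at x0)"
    and bound: "\<forall>\<^sub>F x in at x0. AE y in M. norm (s x y) \<le> w y"
  shows "((\<lambda>x. integral\<^sup>L M (s x)) \<longlongrightarrow> integral\<^sup>L M f) (at x0)"
  unfolding tendsto_at_iff_sequentially comp_def
proof (intro allI impI)
  fix X :: "nat \<Rightarrow> 'a" assume "\<forall>i. X i \<in> UNIV - {x0}" and "X \<longlonglongrightarrow> x0"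
  then have X: "filterlim X (at x0) sequentially"
    by (simp add: filterlim_at)
  from filterlim_iff[THEN iffD1, OF this, rule_format, OF bound]
  obtain N where w: "\<And>n. N \<le> n \<Longrightarrow> AE y in M. norm (s (X n) y) \<le> w y"
    by (auto simp: eventually_sequentially)
  show "(\<lambda>n. integral\<^sup>L M (s (X n))) \<longlonglongrightarrow> integral\<^sup>L M f"
  proof (rule LIMSEQ_offset, rule integral_dominated_convergence)
    show "AE y in M. norm (s (X (n + N)) y) \<le> w y" for n
      by (rule w) auto
    show "AE y in M. (\<lambda>n. s (X (n + N)) y) \<longlonglongrightarrow> f y"
      using lim
    proof eventually_elim
      fix y assume "((\<lambda>x. s x y) \<longlongrightarrow> f y) (at x0)"
      then show "(\<lambda>n. s (X (n + N)) y) \<longlonglongrightarrow> f y"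
        by (intro LIMSEQ_ignore_initial_segment filterlim_compose[OF _ X])
    qed
  qed (use assms in auto)
qed

lemma
  fixes L :: "'m \<Rightarrow> 'a::real_normed_vector \<Rightarrow> 'b::{banach,second_countable_topology}"
  assumes lin: "\<And>y. y \<in> space M \<Longrightarrow> bounded_linear (L y)"
    and bound: "\<And>y. y \<in> space M \<Longrightarrow> onorm (L y) \<le> g y" and g: "integrable M g"
    and meas: "\<And>h. (\<lambda>y. L y h) \<in> borel_measurable M"
  shows integrable_onorm_dominated: "integrable M (\<lambda>y. L y h)"
    and bounded_linear_integral_onorm_dominated: "bounded_linear (\<lambda>h. \<integral>y. L y h \<partial>M)"
proof -
  have L_le: "norm (L y h) \<le> g y * norm h" if "y \<in> space M" for y h
    using onorm[OF lin[OF that], of h] mult_right_mono[OF bound[OF that] norm_ge_zero[of h]]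
    by linarith
  have int: "integrable M (\<lambda>y. L y h)" for h
    by (rule Bochner_Integration.integrable_bound[OF integrable_mult_left[OF g, of "norm h"] meas])
      (auto intro!: AE_I2 order_trans[OF L_le])
  then show "integrable M (\<lambda>y. L y h)" .
  show "bounded_linear (\<lambda>h. \<integral>y. L y h \<partial>M)"
  proof (rule bounded_linear_intro[where K = "\<integral>y. g y \<partial>M"])
    show "(\<integral>y. L y (a + b) \<partial>M) = (\<integral>y. L y a \<partial>M) + (\<integral>y. L y b \<partial>M)" for a b
      using int by (simp add: linear_simps lin cong: Bochner_Integration.integral_cong)
    show "(\<integral>y. L y (c *\<^sub>R a) \<partial>M) = c *\<^sub>R (\<integral>y. L y a \<partial>M)" for c a
      by (simp add: linear_simps lin cong: Bochner_Integration.integral_cong)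
    show "norm (\<integral>y. L y h \<partial>M) \<le> norm h * (\<integral>y. g y \<partial>M)" for h
    proof -
      have "norm (\<integral>y. L y h \<partial>M) \<le> (\<integral>y. norm (L y h) \<partial>M)"
        by (rule integral_norm_bound)
      also have "\<dots> \<le> (\<integral>y. g y * norm h \<partial>M)"
        by (rule integral_mono) (use int g L_le in auto)
      finally show ?thesis by (simp add: mult.commute)
    qed
  qed
qed

lemma linearization_error_le:
  fixes f :: "'a::real_normed_vector \<Rightarrow> 'b::real_normed_vector"
  assumes x: "x \<in> ball x0 r"
    and der: "\<And>z. z \<in> ball x0 r \<Longrightarrow> (f has_derivative f' z) (at z)"
    and bound: "\<And>z. z \<in> ball x0 r \<Longrightarrow> onorm (f' z) \<le> B"
  shows "norm (f x - f x0 - f' x0 (x - x0)) \<le> norm (x - x0) * (2 * B)"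
proof (rule differentiable_bound_linearization[where S = "ball x0 r"])
  have x0: "x0 \<in> ball x0 r"
    using le_less_trans[OF zero_le_dist, of x0 x r] x by simp
  then show "x0 \<in> ball x0 r" .
  show "x0 + t *\<^sub>R (x - x0) \<in> ball x0 r" if "t \<in> {0..1}" for t
  proof -
    have "dist x0 (x0 + t *\<^sub>R (x - x0)) = t * dist x0 x"
      using that by (simp add: dist_norm norm_minus_commute)
    also have "\<dots> \<le> dist x0 x"
      using that by (simp add: mult_left_le_one_le)
    finally show ?thesis using x by simp
  qed
  show "(f has_derivative f' z) (at z within ball x0 r)" if "z \<in> ball x0 r" for z
    using der[OF that] by (rule has_derivative_at_withinI)
  show "onorm (f' z - f' x0) \<le> 2 * B" if z: "z \<in> ball x0 r" for z
  proof -
    have lin: "bounded_linear (f' w)" if "w \<in> ball x0 r" for w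
      using der[OF that] by (rule has_derivative_bounded_linear)
    have "onorm (\<lambda>h. f' z h + - f' x0 h) \<le> onorm (f' z) + onorm (\<lambda>h. - f' x0 h)"
      by (intro onorm_triangle lin z bounded_linear_minus x0)
    then show ?thesis
      using bound[OF z] bound[OF x0] by (simp add: onorm_neg fun_diff_def)
  qed
qed

lemma has_derivative_integral:
  fixes F :: "'a::euclidean_space \<Rightarrow> 'm \<Rightarrow> 'b::{banach,second_countable_topology}"
  assumes "0 < r"
    and der: "\<And>x y. x \<in> ball x0 r \<Longrightarrow> y \<in> space M \<Longrightarrow> ((\<lambda>x. F x y) has_derivative F' x y) (at x)"
    and bound: "\<And>x y. x \<in> ball x0 r \<Longrightarrow> y \<in> space M \<Longrightarrow> onorm (F' x y) \<le> g y"
    and g: "integrable M g"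
    and meas: "\<And>x. F x \<in> borel_measurable M"
    and meas': "\<And>h. (\<lambda>y. F' x0 y h) \<in> borel_measurable M"
    and int: "\<And>x. x \<in> ball x0 r \<Longrightarrow> integrable M (F x)"
  shows "((\<lambda>x. \<integral>y. F x y \<partial>M) has_derivative (\<lambda>h. \<integral>y. F' x0 y h \<partial>M)) (at x0)"
proof -
  have x0: "x0 \<in> ball x0 r" using \<open>0 < r\<close> by simp
  have lin: "bounded_linear (F' x0 y)" if "y \<in> space M" for y
    using der[OF x0 that] by (rule has_derivative_bounded_linear)
  have int': "integrable M (\<lambda>y. F' x0 y h)" for h
    by (rule integrable_onorm_dominated[OF lin bound[OF x0] g meas'])
  define D where "D x y = (F x y - F x0 y - F' x0 y (x - x0)) /\<^sub>R norm (x - x0)" for x y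
  have D_bound: "norm (D x y) \<le> 2 * g y" if x: "x \<in> ball x0 r" and y: "y \<in> space M" for x y
    using linearization_error_le[OF x der[OF _ y] bound[OF _ y]] onorm_pos_le[OF lin[OF y]] bound[OF x0 y]
    by (cases "x = x0") (auto simp: D_def inverse_eq_divide pos_divide_le_eq mult.commute)
  have near: "\<forall>\<^sub>F x in at x0. x \<in> ball x0 r"
    using eventually_at_ball[OF \<open>0 < r\<close>] by (rule eventually_mono) simp
  have "((\<lambda>x. \<integral>y. D x y \<partial>M) \<longlongrightarrow> (\<integral>y. 0 \<partial>M)) (at x0)"
  proof (rule integral_dominated_convergence_at[where w = "\<lambda>y. 2 * g y"])
    show "D x \<in> borel_measurable M" for x
      unfolding D_def by (intro borel_measurable_scaleR borel_measurable_diff meas meas' borel_measurable_const)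
    show "AE y in M. ((\<lambda>x. D x y) \<longlongrightarrow> 0) (at x0)"
      using der[OF x0] unfolding has_derivative_at_within D_def by (simp add: diff_diff_eq)
    show "\<forall>\<^sub>F x in at x0. AE y in M. norm (D x y) \<le> 2 * g y"
      using near by (rule eventually_mono) (simp add: D_bound)
  qed (use g in simp_all)
  moreover have "\<forall>\<^sub>F x in at x0. (\<integral>y. D x y \<partial>M)
      = ((\<integral>y. F x y \<partial>M) - (\<integral>y. F x0 y \<partial>M) - (\<integral>y. F' x0 y (x - x0) \<partial>M)) /\<^sub>R norm (x - x0)"
    using near by (rule eventually_mono) (use int int[OF x0] int' in \<open>simp add: D_def\<close>)
  ultimately have "((\<lambda>x. ((\<integral>y. F x y \<partial>M) - (\<integral>y. F x0 y \<partial>M) - (\<integral>y. F' x0 y (x - x0) \<partial>M))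
      /\<^sub>R norm (x - x0)) \<longlongrightarrow> 0) (at x0)"
    by (simp add: Lim_transform_eventually)
  then show ?thesis
    using bounded_linear_integral_onorm_dominated[OF lin bound[OF x0] g meas']
    unfolding has_derivative_at_within by (simp add: diff_diff_eq)
qed

lemma one_plus_norm_add_le: "1 + norm (a + b) \<le> (1 + norm a) * (1 + norm b)"
proof -
  have "(1 + norm a) * (1 + norm b) = 1 + norm a + norm b + norm a * norm b"
    by (simp add: algebra_simps)
  with norm_triangle_ineq[of a b] show ?thesis
    by (smt (verit) mult_nonneg_nonneg norm_ge_zero)
qed

lemma one_plus_norm_le_square: "1 + norm y \<le> (1 + norm y)\<^sup>2"
  using mult_left_mono[of 1 "1 + norm y" "1 + norm y"] by (simp add: power2_eq_square)

lemma norm_diff_le_one_plus_norm_mult: "norm (y - v) \<le> (1 + norm v) * (1 + norm y)"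
  using one_plus_norm_add_le[of y "- v"] by (simp add: mult.commute)

lemma exp_neg_square_mult_le:
  fixes t s :: real assumes "0 < s"
  shows "exp (- t\<^sup>2 / (2 * s)) * (1 + t)\<^sup>2 \<le> 2 * (1 + 2 * s)"
proof -
  define e where "e = exp (- t\<^sup>2 / (2 * s))"
  have "t\<^sup>2 / (2 * s) \<le> exp (t\<^sup>2 / (2 * s))"
    using exp_ge_add_one_self[of "t\<^sup>2 / (2 * s)"] by linarith
  then have "e * t\<^sup>2 \<le> 2 * s"
    using \<open>0 < s\<close> by (simp add: e_def exp_minus divide_le_eq field_simps)
  moreover have "e \<le> 1"
    using \<open>0 < s\<close> by (simp add: e_def)
  moreover have "(1 + t)\<^sup>2 \<le> 2 * (1 + t\<^sup>2)"
    using zero_le_power2[of "t - 1"] by (simp add: power2_eq_square algebra_simps)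
  then have "e * (1 + t)\<^sup>2 \<le> e * (2 * (1 + t\<^sup>2))"
    by (rule mult_left_mono) (simp add: e_def)
  ultimately show ?thesis
    unfolding e_def[symmetric] by (simp add: algebra_simps)
qed

lemma norm_outer: "norm (outer u v) = norm u * norm v"
proof -
  have "norm (outer u v) = L2_set (\<lambda>i. norm v * \<bar>u $ i\<bar>) UNIV"
    unfolding norm_vec_def[of "outer u v"]
  proof (rule L2_set_cong)
    fix i
    have "outer u v $ i = (u $ i) *\<^sub>R v"
      by (simp add: outer_def vec_eq_iff)
    then show "norm (outer u v $ i) = norm v * \<bar>u $ i\<bar>"
      by simp
  qed simp
  also have "\<dots> = norm v * norm u"
    by (simp add: L2_set_right_distrib norm_vec_def)
  finally show ?thesis by simp
qed

lemma outer_mult_vec: "outer u v *v h = (v \<bullet> h) *\<^sub>R u"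
  by (simp add: outer_def vec_eq_iff matrix_vector_mult_def inner_vec_def sum_distrib_left ac_simps)

lemma borel_measurable_outer [measurable]: "(\<lambda>y. outer (y - u) (y - v)) \<in> borel_measurable borel"
  unfolding outer_def by (intro borel_measurable_continuous_onI continuous_intros)

lemma bounded_linear_matrix_vector_mult_left: "bounded_linear (\<lambda>A :: real^'n^'m. A *v h)"
proof -
  have "linear (\<lambda>A :: real^'n^'m. A *v h)"
    by (rule linearI) (simp_all add: matrix_vector_mult_add_rdistrib scaleR_matrix_vector_assoc)
  then show ?thesis
    by (simp add: linear_conv_bounded_linear)
qed

lemma psd_scaleR: "0 \<le> c \<Longrightarrow> psd A \<Longrightarrow> psd (c *\<^sub>R A)"
  by (simp add: psd_def scaleR_matrix_vector_assoc[symmetric])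

lemma psd_hessian_if_covariance_le:
  fixes S :: "real^'n^'n"
  assumes "0 < lam" and "0 < del" and "psd ((lam * del) *\<^sub>R mat 1 - S)"
  shows "psd ((1 / lam) *\<^sub>R mat 1 - (1 / (lam\<^sup>2 * del)) *\<^sub>R S)"
proof -
  have "(1 / lam) *\<^sub>R mat 1 - (1 / (lam\<^sup>2 * del)) *\<^sub>R S = (1 / (lam\<^sup>2 * del)) *\<^sub>R ((lam * del) *\<^sub>R mat 1 - S)"
    using assms(1,2) by (simp add: scaleR_diff_right power2_eq_square)
  then show ?thesis
    using assms by (simp add: psd_scaleR)
qed

lemma gauss_dens_pos: "0 < s \<Longrightarrow> 0 < gauss_dens s x y"
  by (simp add: gauss_dens_def)

lemma gauss_dens_eq:
  fixes x y :: "real^'n"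
  shows "gauss_dens s x y = gauss_dens s (0 :: real^'n) 0 * exp (- (norm (y - x))\<^sup>2 / (2 * s))"
  by (simp add: gauss_dens_def)

lemma mu_dens_pos: "0 < mu_dens f lam del x y"
  by (simp add: mu_dens_def)

lemma gauss_exp_gibbs:
  fixes x :: "real^'n"
  shows "gauss_exp (lam * del) x (\<lambda>y. exp (- f y / del) *\<^sub>R g y)
     = gauss_dens (lam * del) (0 :: real^'n) 0 *\<^sub>R (\<integral>y. mu_dens f lam del x y *\<^sub>R g y \<partial>lborel)"
  unfolding gauss_exp_def integral_scaleR_right[symmetric]
  by (rule Bochner_Integration.integral_cong)
    (simp_all add: gauss_dens_eq[of _ x] mu_dens_def mult.assoc mult.left_commute)

lemma gauss_exp_gibbs_weight:
  fixes x :: "real^'n"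
  shows "gauss_exp (lam * del) x (\<lambda>y. exp (- f y / del))
     = gauss_dens (lam * del) (0 :: real^'n) 0 * (\<integral>y. mu_dens f lam del x y \<partial>lborel)"
  using gauss_exp_gibbs[of lam del x f "\<lambda>_. 1 :: real"] by simp

locale integrable_gibbs_weight =
  fixes f :: "real^'n \<Rightarrow> real" and lam del :: real
  assumes lam_pos: "0 < lam" and del_pos: "0 < del"
    and f_measurable [measurable]: "f \<in> borel_measurable lborel"
    and nn_integral_gibbs_finite: "(\<integral>\<^sup>+ y. ennreal (exp (- f y / del)) \<partial>lborel) < \<infinity>"
begin

lemma integrable_gibbs: "integrable lborel (\<lambda>y. exp (- f y / del))"
  using nn_integral_gibbs_finite by (intro integrableI_nonneg) auto

lemma mu_dens_measurable [measurable]: "mu_dens f lam del x \<in> borel_measurable lborel"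
  unfolding mu_dens_def by measurable

lemma mu_dens_has_derivative:
  "((\<lambda>x. mu_dens f lam del x y) has_derivative
     (\<lambda>h. mu_dens f lam del x y * ((y - x) \<bullet> h) / (lam * del))) (at x)"
  unfolding mu_dens_def power2_norm_eq_inner
  using lam_pos del_pos by (auto intro!: derivative_eq_intros simp: inner_commute field_simps)

lemma mu_dens_growth_le:
  "mu_dens f lam del x y * (1 + norm y)\<^sup>2
     \<le> exp (- f y / del) * (2 * (1 + 2 * (lam * del)) * (1 + norm x)\<^sup>2)"
proof -
  have s: "0 < lam * del" using lam_pos del_pos by simp
  have "(1 + norm y)\<^sup>2 \<le> ((1 + norm x) * (1 + norm (y - x)))\<^sup>2"
    using one_plus_norm_add_le[of x "y - x"] by (intro power_mono) auto
  then have "mu_dens f lam del x y * (1 + norm y)\<^sup>2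
      \<le> exp (- f y / del) * (1 + norm x)\<^sup>2
         * (exp (- (norm (y - x))\<^sup>2 / (2 * (lam * del))) * (1 + norm (y - x))\<^sup>2)"
    using mu_dens_pos[of f lam del x y]
    by (simp add: mu_dens_def power_mult_distrib mult.assoc mult.left_commute)
  also have "\<dots> \<le> exp (- f y / del) * (1 + norm x)\<^sup>2 * (2 * (1 + 2 * (lam * del)))"
    by (intro mult_left_mono exp_neg_square_mult_le s) simp
  finally show ?thesis by (simp add: ac_simps)
qed

lemma integrable_mu_dens_scaleR:
  fixes q :: "real^'n \<Rightarrow> 'b::{banach,second_countable_topology}"
  assumes [measurable]: "q \<in> borel_measurable lborel"
    and growth: "\<And>y. norm (q y) \<le> C * (1 + norm y)\<^sup>2"
  shows "integrable lborel (\<lambda>y. mu_dens f lam del x y *\<^sub>R q y)"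
proof (rule Bochner_Integration.integrable_bound)
  show "integrable lborel (\<lambda>y. exp (- f y / del) * (C * (2 * (1 + 2 * (lam * del)) * (1 + norm x)\<^sup>2)))"
    using integrable_gibbs by simp
  show "AE y in lborel. norm (mu_dens f lam del x y *\<^sub>R q y)
      \<le> norm (exp (- f y / del) * (C * (2 * (1 + 2 * (lam * del)) * (1 + norm x)\<^sup>2)))"
  proof (rule AE_I2)
    fix y
    have "0 \<le> C"
      using order_trans[OF norm_ge_zero growth[of 0]] by simp
    have mu: "0 \<le> mu_dens f lam del x y"
      using mu_dens_pos less_imp_le by blast
    have "norm (mu_dens f lam del x y *\<^sub>R q y) = mu_dens f lam del x y * norm (q y)"
      using mu by simp
    also have "\<dots> \<le> mu_dens f lam del x y * (C * (1 + norm y)\<^sup>2)"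
      using growth mu by (rule mult_left_mono)
    also have "\<dots> = C * (mu_dens f lam del x y * (1 + norm y)\<^sup>2)"
      by (simp only: ac_simps)
    also have "\<dots> \<le> C * (exp (- f y / del) * (2 * (1 + 2 * (lam * del)) * (1 + norm x)\<^sup>2))"
      using mu_dens_growth_le \<open>0 \<le> C\<close> by (rule mult_left_mono)
    also have "\<dots> \<le> norm (exp (- f y / del) * (C * (2 * (1 + 2 * (lam * del)) * (1 + norm x)\<^sup>2)))"
      by (simp only: ac_simps real_norm_def abs_ge_self)
    finally show "norm (mu_dens f lam del x y *\<^sub>R q y)
        \<le> norm (exp (- f y / del) * (C * (2 * (1 + 2 * (lam * del)) * (1 + norm x)\<^sup>2)))" .
  qed
qed simp

lemma onorm_mu_dens_derivative_le:
  fixes p :: "real^'n \<Rightarrow> 'b::real_normed_vector"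
  assumes growth: "\<And>y. norm (p y) \<le> P * (1 + norm y)" and x: "x \<in> ball x0 1"
  shows "onorm (\<lambda>h. (mu_dens f lam del x y * ((y - x) \<bullet> h) / (lam * del)) *\<^sub>R p y)
    \<le> exp (- f y / del) * (2 * (1 + 2 * (lam * del)) * P * (2 + norm x0) ^ 3 / (lam * del))"
proof -
  let ?s = "lam * del" and ?m = "mu_dens f lam del x y"
  have s: "0 < ?s" using lam_pos del_pos by simp
  have "0 \<le> P"
    using order_trans[OF norm_ge_zero growth[of 0]] by simp
  have m: "0 \<le> ?m"
    using mu_dens_pos less_imp_le by blast
  have "onorm (\<lambda>h. (?m * ((y - x) \<bullet> h) / (lam * del)) *\<^sub>R p y) \<le> ?m * (norm (y - x) * norm (p y)) / ?s"
  proof (rule onorm_le)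
    fix h
    have "norm ((?m * ((y - x) \<bullet> h) / (lam * del)) *\<^sub>R p y) = ?m * \<bar>(y - x) \<bullet> h\<bar> * norm (p y) / ?s"
      using m lam_pos del_pos by (simp add: abs_mult)
    also have "\<dots> \<le> ?m * (norm (y - x) * norm h) * norm (p y) / ?s"
      using m s Cauchy_Schwarz_ineq2[of "y - x" h]
      by (intro divide_right_mono mult_right_mono mult_left_mono) auto
    finally show "norm ((?m * ((y - x) \<bullet> h) / (lam * del)) *\<^sub>R p y) \<le> ?m * (norm (y - x) * norm (p y)) / ?s * norm h"
      by (simp add: ac_simps)
  qed
  also have "\<dots> \<le> ?m * ((1 + norm x) * (1 + norm y) * (P * (1 + norm y))) / ?s"
  proof -
    have "norm (y - x) * norm (p y) \<le> (1 + norm x) * (1 + norm y) * (P * (1 + norm y))"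
      using norm_diff_le_one_plus_norm_mult[of y x] growth[of y] by (intro mult_mono) auto
    then show ?thesis
      using m s by (intro divide_right_mono mult_left_mono) auto
  qed
  also have "\<dots> = (?m * (1 + norm y)\<^sup>2) * (P * (1 + norm x)) / ?s"
    by (simp add: power2_eq_square ac_simps)
  also have "\<dots> \<le> exp (- f y / del) * (2 * (1 + 2 * ?s) * (1 + norm x)\<^sup>2) * (P * (1 + norm x)) / ?s"
    using mu_dens_growth_le[of x y] \<open>0 \<le> P\<close> s
    by (intro divide_right_mono mult_right_mono) auto
  also have "\<dots> = exp (- f y / del) * (2 * (1 + 2 * ?s) * P * (1 + norm x) ^ 3 / ?s)"
    by (simp add: power2_eq_square power3_eq_cube)
  also have "\<dots> \<le> exp (- f y / del) * (2 * (1 + 2 * ?s) * P * (2 + norm x0) ^ 3 / ?s)"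
  proof -
    have "1 + norm x \<le> 2 + norm x0"
      using x norm_triangle_ineq2[of x x0] by (simp add: dist_norm norm_minus_commute)
    then have "(1 + norm x) ^ 3 \<le> (2 + norm x0) ^ 3"
      by (intro power_mono) auto
    then show ?thesis
      using s \<open>0 \<le> P\<close> by (intro mult_left_mono divide_right_mono) auto
  qed
  finally show ?thesis .
qed

lemma has_derivative_mu_dens_integral:
  fixes p :: "real^'n \<Rightarrow> 'b::{banach,second_countable_topology}"
  assumes [measurable]: "p \<in> borel_measurable lborel"
    and growth: "\<And>y. norm (p y) \<le> P * (1 + norm y)"
  shows "((\<lambda>x. \<integral>y. mu_dens f lam del x y *\<^sub>R p y \<partial>lborel) has_derivative
     (\<lambda>h. \<integral>y. (mu_dens f lam del x0 y * ((y - x0) \<bullet> h) / (lam * del)) *\<^sub>R p y \<partial>lborel)) (at x0)"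
proof (rule has_derivative_integral)
  have "0 \<le> P"
    using order_trans[OF norm_ge_zero growth[of 0]] by simp
  have "norm (p y) \<le> P * (1 + norm y)\<^sup>2" for y
    using growth[of y] mult_left_mono[OF one_plus_norm_le_square[of y] \<open>0 \<le> P\<close>] by linarith
  then show "integrable lborel (\<lambda>y. mu_dens f lam del x y *\<^sub>R p y)" for x
    by (intro integrable_mu_dens_scaleR) simp_all
  show "integrable lborel
      (\<lambda>y. exp (- f y / del) * (2 * (1 + 2 * (lam * del)) * P * (2 + norm x0) ^ 3 / (lam * del)))"
    using integrable_gibbs by simp
  fix x y assume x: "x \<in> ball x0 1"
  show "((\<lambda>x. mu_dens f lam del x y *\<^sub>R p y) has_derivative
      (\<lambda>h. (mu_dens f lam del x y * ((y - x) \<bullet> h) / (lam * del)) *\<^sub>R p y)) (at x)"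
    by (rule has_derivative_scaleR_left[OF mu_dens_has_derivative])
  show "onorm (\<lambda>h. (mu_dens f lam del x y * ((y - x) \<bullet> h) / (lam * del)) *\<^sub>R p y)
      \<le> exp (- f y / del) * (2 * (1 + 2 * (lam * del)) * P * (2 + norm x0) ^ 3 / (lam * del))"
    by (rule onorm_mu_dens_derivative_le[OF growth x])
qed simp_all

definition mass :: "real^'n \<Rightarrow> real"
  where "mass x = (\<integral>y. mu_dens f lam del x y \<partial>lborel)"

definition moment :: "real^'n \<Rightarrow> real^'n"
  where "moment x = (\<integral>y. mu_dens f lam del x y *\<^sub>R y \<partial>lborel)"

lemma integrable_mu_dens: "integrable lborel (mu_dens f lam del x)"
  using integrable_mu_dens_scaleR[of "\<lambda>_. 1 :: real" 1 x] one_plus_norm_le_square by force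

lemma integrable_mu_dens_scaleR_id: "integrable lborel (\<lambda>y. mu_dens f lam del x y *\<^sub>R y)"
proof (rule integrable_mu_dens_scaleR[where C = 1])
  show "norm y \<le> 1 * (1 + norm y)\<^sup>2" for y :: "real^'n"
    using one_plus_norm_le_square[of y] by simp
qed simp

lemma mass_pos: "0 < mass x"
proof -
  have "0 \<le> mass x"
    unfolding mass_def by (simp add: less_imp_le mu_dens_pos)
  moreover have "mass x \<noteq> 0"
  proof
    assume "mass x = 0"
    moreover have "AE y in lborel. 0 \<le> mu_dens f lam del x y"
      by (simp add: mu_dens_pos less_imp_le)
    ultimately have "AE y in lborel. mu_dens f lam del x y = 0"
      using integral_nonneg_eq_0_iff_AE[OF integrable_mu_dens] by (simp add: mass_def)
    then have "AE y :: real^'n in lborel. False"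
      by (simp add: mu_dens_pos[THEN order_less_imp_not_eq2])
    then have "emeasure lborel (UNIV :: (real^'n) set) = 0"
      using ae_filter_eq_bot_iff[of lborel] trivial_limit_def by force
    then show False
      by simp
  qed
  ultimately show ?thesis
    by simp
qed

lemma zprox_eq: "zprox f lam del x = inverse (mass x) *\<^sub>R moment x"
  using gauss_exp_gibbs[of lam del x f "\<lambda>y. y"] gauss_exp_gibbs_weight[of lam del x f]
    gauss_dens_pos[of "lam * del" "0 :: real^'n" 0] lam_pos del_pos
  by (simp add: zprox_def mass_def moment_def)

lemma soft_moreau_eq:
  "soft_moreau f lam del x = - del * ln (gauss_dens (lam * del) (0 :: real^'n) 0 * mass x)"
  unfolding soft_moreau_def gauss_exp_gibbs_weight mass_def ..

lemma moment_eq: "moment x = mass x *\<^sub>R zprox f lam del x"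
  using mass_pos[of x] by (simp add: zprox_eq)

lemma integral_mu_dens_scaleR_diff:
  "(\<integral>y. mu_dens f lam del x y *\<^sub>R (y - v) \<partial>lborel) = mass x *\<^sub>R (zprox f lam del x - v)"
proof -
  have "(\<integral>y. mu_dens f lam del x y *\<^sub>R (y - v) \<partial>lborel) = moment x - mass x *\<^sub>R v"
    using integrable_mu_dens_scaleR_id[of x] integrable_scaleR_left[OF integrable_mu_dens[of x], of v]
    by (simp add: scaleR_diff_right moment_def mass_def integrable_mu_dens)
  then show ?thesis
    by (simp add: moment_eq scaleR_diff_right)
qed

lemma integrable_mu_dens_scaleR_diff: "integrable lborel (\<lambda>y. mu_dens f lam del x y *\<^sub>R (y - v))"
  using integrable_mu_dens_scaleR_id[of x] integrable_scaleR_left[OF integrable_mu_dens[of x], of v]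
  by (simp add: scaleR_diff_right)

lemma integral_mu_dens_inner_diff:
  "(\<integral>y. mu_dens f lam del x y * ((y - v) \<bullet> h) \<partial>lborel) = mass x * ((zprox f lam del x - v) \<bullet> h)"
  using integral_inner_left[OF integrable_mu_dens_scaleR_diff[of x v], of h]
  by (simp add: integral_mu_dens_scaleR_diff)

lemma integrable_mu_dens_inner_diff: "integrable lborel (\<lambda>y. mu_dens f lam del x y * ((y - v) \<bullet> h))"
  using integrable_inner_left[OF integrable_mu_dens_scaleR_diff[of x v], of h] by simp

lemma integrable_mu_dens_outer:
  "integrable lborel (\<lambda>y. mu_dens f lam del x y *\<^sub>R outer (y - v) (y - v))"
proof (rule integrable_mu_dens_scaleR[where C = "(1 + norm v)\<^sup>2"])
  show "norm (outer (y - v) (y - v)) \<le> (1 + norm v)\<^sup>2 * (1 + norm y)\<^sup>2" for y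
    using power_mono[OF norm_diff_le_one_plus_norm_mult[of y v], of 2]
    by (simp add: norm_outer power2_eq_square power_mult_distrib ac_simps)
qed simp

lemma integrable_mu_dens_covariance:
  "integrable lborel (\<lambda>y. (mu_dens f lam del x y * ((y - v) \<bullet> h)) *\<^sub>R (y - v))"
  using integrable_bounded_linear[OF bounded_linear_matrix_vector_mult_left integrable_mu_dens_outer]
  by (simp add: scaleR_matrix_vector_assoc[symmetric] outer_mult_vec)

lemma integrable_mu_dens_inner_diff_scaleR:
  "integrable lborel (\<lambda>y. (mu_dens f lam del x y * ((y - v) \<bullet> h)) *\<^sub>R y)"
  using Bochner_Integration.integrable_add[OF integrable_mu_dens_covariance[of x v h]
      integrable_scaleR_left[OF integrable_mu_dens_inner_diff[of x v h], of v]]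
  by (simp add: scaleR_diff_right)

lemma Sigma_mult_vec:
  "Sigma f lam del x *v h = inverse (mass x) *\<^sub>R
     (\<integral>y. (mu_dens f lam del x y * ((y - zprox f lam del x) \<bullet> h)) *\<^sub>R (y - zprox f lam del x) \<partial>lborel)"
proof -
  let ?m = "zprox f lam del x"
  have "(\<integral>y. mu_dens f lam del x y *\<^sub>R outer (y - ?m) (y - ?m) \<partial>lborel) *v h
      = (\<integral>y. (mu_dens f lam del x y *\<^sub>R outer (y - ?m) (y - ?m)) *v h \<partial>lborel)"
    by (rule integral_bounded_linear[OF bounded_linear_matrix_vector_mult_left integrable_mu_dens_outer, symmetric])
  then show ?thesis
    by (simp add: Sigma_def mass_def scaleR_matrix_vector_assoc[symmetric] outer_mult_vec)
qed

lemma integral_mu_dens_covariance: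
  "(\<integral>y. (mu_dens f lam del x y * ((y - zprox f lam del x) \<bullet> h)) *\<^sub>R (y - zprox f lam del x) \<partial>lborel)
     = (\<integral>y. (mu_dens f lam del x y * ((y - x) \<bullet> h)) *\<^sub>R y \<partial>lborel)
       - (mass x * ((zprox f lam del x - x) \<bullet> h)) *\<^sub>R zprox f lam del x"
proof -
  let ?m = "zprox f lam del x" and ?mu = "mu_dens f lam del x"
  have A: "integrable lborel (\<lambda>y. (?mu y * ((y - x) \<bullet> h)) *\<^sub>R y)"
    by (rule integrable_mu_dens_inner_diff_scaleR)
  have B: "integrable lborel (\<lambda>y. (?mu y * ((y - x) \<bullet> h)) *\<^sub>R ?m)"
    by (rule integrable_scaleR_left[OF integrable_mu_dens_inner_diff])
  have C: "integrable lborel (\<lambda>y. ((?m - x) \<bullet> h) *\<^sub>R (?mu y *\<^sub>R (y - ?m)))"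
    by (rule integrable_scaleR_right[OF integrable_mu_dens_scaleR_diff])
  have "(\<integral>y. (?mu y * ((y - ?m) \<bullet> h)) *\<^sub>R (y - ?m) \<partial>lborel)
      = (\<integral>y. (?mu y * ((y - x) \<bullet> h)) *\<^sub>R y - (?mu y * ((y - x) \<bullet> h)) *\<^sub>R ?m
          - ((?m - x) \<bullet> h) *\<^sub>R (?mu y *\<^sub>R (y - ?m)) \<partial>lborel)"
    by (rule Bochner_Integration.integral_cong) (simp_all add: algebra_simps inner_diff_left)
  also have "\<dots> = (\<integral>y. (?mu y * ((y - x) \<bullet> h)) *\<^sub>R y \<partial>lborel)
      - (\<integral>y. ?mu y * ((y - x) \<bullet> h) \<partial>lborel) *\<^sub>R ?m
      - ((?m - x) \<bullet> h) *\<^sub>R (\<integral>y. ?mu y *\<^sub>R (y - ?m) \<partial>lborel)"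
    using integrable_mu_dens_inner_diff
    by (simp only: Bochner_Integration.integral_diff[OF Bochner_Integration.integrable_diff[OF A B] C]
        Bochner_Integration.integral_diff[OF A B] integral_scaleR_left integral_scaleR_right)
  finally show ?thesis
    by (simp add: integral_mu_dens_inner_diff integral_mu_dens_scaleR_diff)
qed

lemma Sigma_psd: "psd (Sigma f lam del x)"
  unfolding psd_def
proof
  fix v :: "real^'n"
  let ?m = "zprox f lam del x" and ?mu = "mu_dens f lam del x"
  have "v \<bullet> (Sigma f lam del x *v v)
      = inverse (mass x) * (v \<bullet> (\<integral>y. (?mu y * ((y - ?m) \<bullet> v)) *\<^sub>R (y - ?m) \<partial>lborel))"
    by (simp add: Sigma_mult_vec)
  also have "v \<bullet> (\<integral>y. (?mu y * ((y - ?m) \<bullet> v)) *\<^sub>R (y - ?m) \<partial>lborel)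
      = (\<integral>y. v \<bullet> ((?mu y * ((y - ?m) \<bullet> v)) *\<^sub>R (y - ?m)) \<partial>lborel)"
    by (rule integral_inner_right[symmetric]) (rule integrable_mu_dens_covariance)
  also have "\<dots> = (\<integral>y. ?mu y * ((y - ?m) \<bullet> v)\<^sup>2 \<partial>lborel)"
    by (simp add: power2_eq_square inner_commute mult.assoc)
  finally show "0 \<le> v \<bullet> (Sigma f lam del x *v v)"
    using mass_pos[of x] by (simp add: less_imp_le mu_dens_pos)
qed

lemma mass_has_derivative:
  "(mass has_derivative (\<lambda>h. mass x * ((zprox f lam del x - x) \<bullet> h) / (lam * del))) (at x)"
proof -
  have "((\<lambda>x. \<integral>y. mu_dens f lam del x y *\<^sub>R (1 :: real) \<partial>lborel) has_derivative
      (\<lambda>h. \<integral>y. (mu_dens f lam del x y * ((y - x) \<bullet> h) / (lam * del)) *\<^sub>R (1 :: real) \<partial>lborel)) (at x)"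
    by (rule has_derivative_mu_dens_integral[where P = 1]) simp_all
  then show ?thesis
    by (simp add: mass_def[abs_def] integral_mu_dens_inner_diff[unfolded mass_def])
qed

lemma moment_has_derivative:
  "(moment has_derivative
     (\<lambda>h. (1 / (lam * del)) *\<^sub>R (\<integral>y. (mu_dens f lam del x y * ((y - x) \<bullet> h)) *\<^sub>R y \<partial>lborel))) (at x)"
proof -
  have "(moment has_derivative
      (\<lambda>h. \<integral>y. (mu_dens f lam del x y * ((y - x) \<bullet> h) / (lam * del)) *\<^sub>R y \<partial>lborel)) (at x)"
    unfolding moment_def[abs_def] by (rule has_derivative_mu_dens_integral[where P = 1]) simp_all
  moreover have "(mu_dens f lam del x y * ((y - x) \<bullet> h) / (lam * del)) *\<^sub>R y
      = (1 / (lam * del)) *\<^sub>R ((mu_dens f lam del x y * ((y - x) \<bullet> h)) *\<^sub>R y)" for y h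
    by simp
  ultimately show ?thesis
    by (simp only: integral_scaleR_right)
qed

lemma zprox_has_derivative:
  "(zprox f lam del has_derivative (\<lambda>h. (1 / (lam * del)) *\<^sub>R (Sigma f lam del x *v h))) (at x)"
proof -
  let ?m = "zprox f lam del x" and ?J = "\<lambda>h. \<integral>y. (mu_dens f lam del x y * ((y - x) \<bullet> h)) *\<^sub>R y \<partial>lborel"
  have Z: "mass x \<noteq> 0"
    using mass_pos[of x] by simp
  have "zprox f lam del = (\<lambda>x. inverse (mass x) *\<^sub>R moment x)"
    using zprox_eq by auto
  moreover note has_derivative_scaleR[OF Deriv.has_derivative_inverse[OF Z mass_has_derivative] moment_has_derivative]
  moreover have "inverse (mass x) *\<^sub>R ((1 / (lam * del)) *\<^sub>R ?J h)
      + (- (inverse (mass x) * (mass x * ((?m - x) \<bullet> h) / (lam * del)) * inverse (mass x))) *\<^sub>R moment x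
      = (1 / (lam * del)) *\<^sub>R (Sigma f lam del x *v h)" for h
  proof -
    have "Sigma f lam del x *v h = inverse (mass x) *\<^sub>R (?J h - (mass x * ((?m - x) \<bullet> h)) *\<^sub>R ?m)"
      by (simp only: Sigma_mult_vec integral_mu_dens_covariance)
    with Z show ?thesis
      by (simp add: moment_eq scaleR_diff_right)
  qed
  ultimately show ?thesis
    by (simp add: has_derivative_eq_rhs)
qed

lemma soft_moreau_has_derivative:
  "(soft_moreau f lam del has_derivative (\<lambda>h. ((1 / lam) *\<^sub>R (x - zprox f lam del x)) \<bullet> h)) (at x)"
proof -
  define c where "c = gauss_dens (lam * del) (0 :: real^'n) 0"
  have c: "0 < c"
    unfolding c_def using lam_pos del_pos by (simp add: gauss_dens_pos)
  have "((\<lambda>x. - del * ln (c * mass x)) has_derivative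
      (\<lambda>h. - del * ((c * (mass x * ((zprox f lam del x - x) \<bullet> h) / (lam * del))) * inverse (c * mass x)))) (at x)"
    using c mass_pos[of x]
    by (intro has_derivative_mult_right has_derivative_ln[where g = "\<lambda>x. c * mass x"]
        has_derivative_mult_right mass_has_derivative) simp
  moreover have "soft_moreau f lam del = (\<lambda>x. - del * ln (c * mass x))"
    using soft_moreau_eq by (auto simp: c_def)
  moreover have "- del * ((c * (mass x * ((zprox f lam del x - x) \<bullet> h) / (lam * del))) * inverse (c * mass x))
      = ((1 / lam) *\<^sub>R (x - zprox f lam del x)) \<bullet> h" for h
    using c mass_pos[of x] lam_pos del_pos by (simp add: inner_diff_left field_simps)
  ultimately show ?thesis
    by simp
qed

lemma gradient_has_derivative:
  "((\<lambda>z. (1 / lam) *\<^sub>R (z - zprox f lam del z)) has_derivative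
     (\<lambda>h. ((1 / lam) *\<^sub>R mat 1 - (1 / (lam\<^sup>2 * del)) *\<^sub>R Sigma f lam del x) *v h)) (at x)"
proof -
  have "((\<lambda>z. (1 / lam) *\<^sub>R (z - zprox f lam del z)) has_derivative
      (\<lambda>h. (1 / lam) *\<^sub>R (h - (1 / (lam * del)) *\<^sub>R (Sigma f lam del x *v h)))) (at x)"
    by (intro has_derivative_scaleR_right has_derivative_diff has_derivative_ident zprox_has_derivative)
  moreover have "(1 / lam) *\<^sub>R (h - (1 / (lam * del)) *\<^sub>R (Sigma f lam del x *v h))
      = ((1 / lam) *\<^sub>R mat 1 - (1 / (lam\<^sup>2 * del)) *\<^sub>R Sigma f lam del x) *v h" for h
    by (simp add: matrix_vector_mult_diff_rdistrib scaleR_matrix_vector_assoc[symmetric]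
        scaleR_diff_right power2_eq_square)
  ultimately show ?thesis
    by simp
qed

end

theorem theorem12:
  fixes f :: "real^'n \<Rightarrow> real" and lam del :: real
  assumes "lam > 0" and "del > 0"
    and "continuous_on UNIV f"
    and "\<exists>xm. \<forall>y. f xm \<le> f y"
    and "(\<integral>\<^sup>+ y. ennreal (exp (- f y / del)) \<partial>lborel) < \<infinity>"
  shows "\<forall>x. (\<exists>grad :: real^'n \<Rightarrow> real^'n.
              (\<forall>z. (soft_moreau f lam del has_derivative (\<lambda>h. grad z \<bullet> h)) (at z))
            \<and> (grad has_derivative
                 (\<lambda>h. ((1 / lam) *\<^sub>R mat 1 - (1 / (lam\<^sup>2 * del)) *\<^sub>R Sigma f lam del x) *v h)) (at x))
          \<and> psd (Sigma f lam del x)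
          \<and> (psd ((lam * del) *\<^sub>R mat 1 - Sigma f lam del x) \<longrightarrow>
               psd ((1 / lam) *\<^sub>R mat 1 - (1 / (lam\<^sup>2 * del)) *\<^sub>R Sigma f lam del x))"
proof -
  interpret integrable_gibbs_weight f lam del
    using assms(1,2,5) borel_measurable_continuous_onI[OF assms(3)] by unfold_locales auto
  show ?thesis
    by (auto intro!: exI[of _ "\<lambda>z. (1 / lam) *\<^sub>R (z - zprox f lam del z)"]
        soft_moreau_has_derivative gradient_has_derivative Sigma_psd
        psd_hessian_if_covariance_le[OF assms(1,2)])
qed

end
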